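(* Let $A\in\mathbb{R}^{n\times n}$, $B\in\mathbb{R}^{n\times r}$, $j_{\max}\ge1$, $0<\varepsilon<1$, and shifts $\alpha_1,\ldots,\alpha_{j_{\max}}\in\mathbb{C}$ with $\mathrm{Re}(\alpha_j)<0$, $A+\alpha_jI$ nonsingular, and $\|\mathcal{C}_j\|<1$ for $j=1,\ldots,j_{\max}$. Run the inexact LR-ADI iteration (with $M=I$) of the context, and suppose that for all $1\le k\le j_{\max}$ $$\|s_k\|\le\tfrac12\Big(\sqrt{\|w_{k-1}\|^2+\tfrac{2\varepsilon}{\sigma_k\gamma_k^2j_{\max}}}-\|w_{k-1}\|\Big),\qquad \sigma_k:=\|(A+\alpha_kI)^{-1}\|.$$ Then $\|\mathcal{R}^{\mathrm{comp}}_{j_{\max}}\|\le\|\mathcal{R}^{\mathrm{exact}}_{j_{\max}}\|+\varepsilon$.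
   Context: $\mathcal{C}_k:=(A+\alpha_kI)^{-1}(A-\overline{\alpha_k}I)$. Inexact LR-ADI iteration: $w_0:=B$, $\gamma_k:=\sqrt{-2\,\mathrm{Re}(\alpha_k)}$; $v_k$ arbitrary with $s_k:=w_{k-1}-(A+\alpha_kI)v_k$, $w_k:=w_{k-1}+\gamma_k^2v_k$. Computed residual $\mathcal{R}^{\mathrm{comp}}_k:=w_kw_k^*$. Exact LR-ADI residual (all $s_k=0$, same shifts): $\mathcal{R}^{\mathrm{exact}}_k:=w^{\mathrm{exact}}_k(w^{\mathrm{exact}}_k)^*$ with $w^{\mathrm{exact}}_k:=\mathcal{C}_k\cdots\mathcal{C}_1B$. Norms are spectral. *)

theory Defs
  imports "HOL-Analysis.Analysis"
begin

definition spec_norm :: "complex^'c^'m \<Rightarrow> real" where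
  "spec_norm M = onorm (\<lambda>x. M *v x)"

definition adj :: "complex^'c^'m \<Rightarrow> complex^'m^'c" where
  "adj M = (\<chi> i j. cnj (M $ j $ i))"

definition cmat :: "real^'c^'m \<Rightarrow> complex^'c^'m" where
  "cmat M = (\<chi> i j. complex_of_real (M $ i $ j))"

definition adi_C :: "real^'n^'n \<Rightarrow> complex \<Rightarrow> complex^'n^'n" where
  "adi_C A a = matrix_inv (cmat A + mat a) ** (cmat A - mat (cnj a))"

definition adi_gamma :: "complex \<Rightarrow> real" where
  "adi_gamma a = sqrt (- 2 * Re a)"

primrec w_exact :: "real^'n^'n \<Rightarrow> real^'r^'n \<Rightarrow> (nat \<Rightarrow> complex) \<Rightarrow> nat \<Rightarrow> complex^'r^'n" where
  "w_exact A B alpha 0 = cmat B"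
| "w_exact A B alpha (Suc k) = adi_C A (alpha (Suc k)) ** w_exact A B alpha k"

end

theory Submission
  imports Defs
begin

(* Writing P = A + alpha I and gamma^2 = -2 Re alpha, one has A - conj alpha I = P + gamma^2 I,
   hence C = I + gamma^2 P^-1 and gamma^2 ||P^-1|| = ||C - I|| <= 2.  The inexact update is
   therefore w_k = C_k w_(k-1) + E_k with the perturbation E_k = -gamma_k^2 P_k^-1 s_k of norm
   eta_k <= gamma_k^2 sigma_k ||s_k||.  As ||C_k|| <= 1, one step enlarges the error
   ||w w^* - w_exact w_exact^*|| by at most 2 ||w_(k-1)|| eta_k + eta_k^2, and the tolerance on
   s_k is precisely the positive root that keeps this below epsilon / jmax.  After jmax steps the
   error is at most epsilon, and the triangle inequality finishes the proof. *)

lemma spec_norm_nonneg: "0 \<le> spec_norm M"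
  unfolding spec_norm_def by (simp add: onorm_pos_le)

lemma norm_matrix_vector_mult_le: "norm (M *v x) \<le> spec_norm M * norm x"
  unfolding spec_norm_def by (simp add: onorm)

lemma spec_norm_le:
  assumes "\<And>x. norm (M *v x) \<le> b * norm x"
  shows "spec_norm M \<le> b"
  unfolding spec_norm_def using assms by (rule onorm_le)

lemma spec_norm_mult: "spec_norm (M ** N) \<le> spec_norm M * spec_norm N"
proof -
  have "(\<lambda>x. (M ** N) *v x) = (\<lambda>x. M *v x) \<circ> (\<lambda>x. N *v x)"
    by (simp add: o_def matrix_vector_mul_assoc)
  then show ?thesis
    unfolding spec_norm_def by (simp add: onorm_compose)
qed

lemma spec_norm_add: "spec_norm (M + N) \<le> spec_norm M + spec_norm N"
  unfolding spec_norm_def matrix_vector_mult_add_rdistrib by (simp add: onorm_triangle)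

lemma spec_norm_uminus: "spec_norm (- M) = spec_norm M"
proof -
  have "(\<lambda>x. (- M) *v x) = (\<lambda>x. - (M *v x))"
    by (simp add: fun_eq_iff vec_eq_iff matrix_vector_mult_def sum_negf)
  then show ?thesis
    unfolding spec_norm_def by (simp add: onorm_neg)
qed

lemma spec_norm_diff: "spec_norm (M - N) \<le> spec_norm M + spec_norm N"
  using spec_norm_add[of M "- N"] by (simp add: spec_norm_uminus)

lemma spec_norm_scaleR: "spec_norm (r *\<^sub>R M) = \<bar>r\<bar> * spec_norm M"
proof -
  have "(\<lambda>x. (r *\<^sub>R M) *v x) = (\<lambda>x. r *\<^sub>R (M *v x))"
    by (simp add: fun_eq_iff vec_eq_iff matrix_vector_mult_def scaleR_sum_right)
  then show ?thesis
    unfolding spec_norm_def by (simp add: onorm_scaleR)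
qed

lemma spec_norm_zero: "spec_norm 0 = 0"
  by (intro antisym spec_norm_le spec_norm_nonneg) simp

lemma spec_norm_mat_1_le: "spec_norm (mat 1) \<le> 1"
  by (rule spec_norm_le) simp

lemma inner_adj_matrix_vector_mult: "inner (adj M *v y) z = inner y (M *v z)"
proof -
  have cnj_mult: "inner (cnj m * a) b = inner a (m * b)" for m a b :: complex
    by (simp add: inner_complex_def algebra_simps)
  have "inner (adj M *v y) z = (\<Sum>i\<in>UNIV. \<Sum>j\<in>UNIV. inner (cnj (M $ j $ i) * y $ j) (z $ i))"
    by (simp add: inner_vec_def matrix_vector_mult_def adj_def inner_sum_left)
  also have "\<dots> = (\<Sum>j\<in>UNIV. \<Sum>i\<in>UNIV. inner (y $ j) (M $ j $ i * z $ i))"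
    by (subst sum.swap) (simp add: cnj_mult)
  also have "\<dots> = inner y (M *v z)"
    by (simp add: inner_vec_def matrix_vector_mult_def inner_sum_right)
  finally show ?thesis .
qed

lemma spec_norm_adj_le: "spec_norm (adj M) \<le> spec_norm M"
proof (rule spec_norm_le)
  fix y
  define z where "z = adj M *v y"
  have "norm z * norm z = inner z z"
    by (simp add: norm_eq_sqrt_inner)
  also have "\<dots> = inner y (M *v z)"
    unfolding z_def by (rule inner_adj_matrix_vector_mult)
  also have "\<dots> \<le> norm y * norm (M *v z)"
    by (rule norm_cauchy_schwarz)
  also have "\<dots> \<le> (spec_norm M * norm y) * norm z"
    using mult_left_mono[OF norm_matrix_vector_mult_le norm_ge_zero] by (simp add: mult_ac)
  finally have "norm z * norm z \<le> (spec_norm M * norm y) * norm z" .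
  then show "norm (adj M *v y) \<le> spec_norm M * norm y"
    using spec_norm_nonneg[of M] unfolding z_def[symmetric]
    by (cases "norm z = 0") (auto simp: mult_le_cancel_right)
qed

lemma spec_norm_mult_le:
  assumes "spec_norm M \<le> a" and "spec_norm N \<le> b"
  shows "spec_norm (M ** N) \<le> a * b"
proof -
  have "0 \<le> a"
    using spec_norm_nonneg assms(1) by (rule order_trans)
  then have "spec_norm M * spec_norm N \<le> a * b"
    using assms spec_norm_nonneg by (intro mult_mono)
  then show ?thesis
    using spec_norm_mult by (rule order_trans[rotated])
qed

lemma matrix_add_rdistrib: "(A + B) ** C = A ** C + B ** C"
  for A B :: "'a::semiring_1^'n^'m"
  by (simp add: vec_eq_iff matrix_matrix_mult_def sum.distrib distrib_right)

lemma matrix_diff_ldistrib: "A ** (B - C) = A ** B - A ** C"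
  for A :: "'a::ring_1^'n^'m"
  by (simp add: vec_eq_iff matrix_matrix_mult_def sum_subtractf right_diff_distrib)

lemma matrix_diff_rdistrib: "(A - B) ** C = A ** C - B ** C"
  for A B :: "'a::ring_1^'n^'m"
  by (simp add: vec_eq_iff matrix_matrix_mult_def sum_subtractf left_diff_distrib)

lemma adj_add: "adj (M + N) = adj M + adj N"
  by (simp add: vec_eq_iff adj_def)

lemma adj_matrix_mul: "adj (M ** N) = adj N ** adj M"
  by (simp add: vec_eq_iff matrix_matrix_mult_def adj_def mult.commute)

lemma spec_norm_gram_diff_perturb:
  fixes C :: "complex^'n^'m" and w x :: "complex^'r^'n" and E :: "complex^'r^'m"
  assumes C: "spec_norm C \<le> 1" and E: "spec_norm E \<le> \<eta>"
  shows "spec_norm ((C ** w + E) ** adj (C ** w + E) - (C ** x) ** adj (C ** x))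
           \<le> spec_norm (w ** adj w - x ** adj x) + 2 * spec_norm w * \<eta> + \<eta>\<^sup>2"
proof -
  define D where "D = w ** adj w - x ** adj x"
  have C': "spec_norm (adj C) \<le> 1"
    using spec_norm_adj_le C by (rule order_trans)
  have E': "spec_norm (adj E) \<le> \<eta>"
    using spec_norm_adj_le E by (rule order_trans)
  have "(C ** w + E) ** adj (C ** w + E) - (C ** x) ** adj (C ** x)
      = C ** D ** adj C + C ** w ** adj E + E ** adj w ** adj C + E ** adj E"
    by (simp add: D_def adj_add adj_matrix_mul matrix_add_ldistrib matrix_add_rdistrib
        matrix_diff_ldistrib matrix_diff_rdistrib matrix_mul_assoc)
  also have "spec_norm \<dots> \<le> spec_norm (C ** D ** adj C) + spec_norm (C ** w ** adj E)
      + spec_norm (E ** adj w ** adj C) + spec_norm (E ** adj E)"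
    by (intro order_trans[OF spec_norm_add] add_right_mono order_refl)
  also have "\<dots> \<le> spec_norm D + 2 * spec_norm w * \<eta> + \<eta>\<^sup>2"
  proof -
    have "spec_norm (C ** D ** adj C) \<le> spec_norm D"
      using spec_norm_mult_le[OF spec_norm_mult_le[OF C order_refl] C'] by simp
    moreover have "spec_norm (C ** w ** adj E) \<le> spec_norm w * \<eta>"
      using spec_norm_mult_le[OF spec_norm_mult_le[OF C order_refl] E'] by simp
    moreover have "spec_norm (E ** adj w ** adj C) \<le> spec_norm w * \<eta>"
      using spec_norm_mult_le[OF spec_norm_mult_le[OF E spec_norm_adj_le] C']
      by (simp add: mult.commute)
    moreover have "spec_norm (E ** adj E) \<le> \<eta>\<^sup>2"
      using spec_norm_mult_le[OF E E'] by (simp add: power2_eq_square)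
    ultimately show ?thesis
      by linarith
  qed
  finally show ?thesis
    by (simp add: D_def)
qed

lemma matrix_inv_left: "invertible A \<Longrightarrow> matrix_inv A ** A = mat 1"
  unfolding invertible_def matrix_inv_def by (rule someI2_ex) auto

lemma adi_gamma_sq: "Re a \<le> 0 \<Longrightarrow> (adi_gamma a)\<^sup>2 = - 2 * Re a"
  by (simp add: adi_gamma_def)

lemma adi_C_eq:
  fixes A :: "real^'n^'n"
  assumes "Re a \<le> 0" and "invertible (cmat A + mat a)"
  shows "adi_C A a = mat 1 + (adi_gamma a)\<^sup>2 *\<^sub>R matrix_inv (cmat A + mat a)"
proof -
  have shift: "cmat A - mat (cnj a) = (cmat A + mat a) + (adi_gamma a)\<^sup>2 *\<^sub>R mat 1"
    using assms(1) by (auto simp: adi_gamma_sq vec_eq_iff mat_def complex_eq_iff)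
  show ?thesis
    unfolding adi_C_def shift
    by (subst matrix_add_ldistrib) (simp add: matrix_scalar_ac matrix_inv_left[OF assms(2)])
qed

lemma adi_gamma_sq_spec_norm_inv_le:
  fixes A :: "real^'n^'n"
  assumes "Re a \<le> 0" and "invertible (cmat A + mat a)" and "spec_norm (adi_C A a) \<le> 1"
  shows "(adi_gamma a)\<^sup>2 * spec_norm (matrix_inv (cmat A + mat a)) \<le> 2"
proof -
  have "(adi_gamma a)\<^sup>2 * spec_norm (matrix_inv (cmat A + mat a)) = spec_norm (adi_C A a - mat 1)"
    by (simp add: adi_C_eq[OF assms(1,2)] spec_norm_scaleR)
  also have "\<dots> \<le> spec_norm (adi_C A a) + spec_norm (mat 1 :: complex^'n^'n)"
    by (rule spec_norm_diff)
  also have "\<dots> \<le> 1 + 1"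
    using assms(3) spec_norm_mat_1_le by (rule add_mono)
  finally show ?thesis
    by simp
qed

lemma inexact_adi_update_eq:
  assumes "Re a \<le> 0" and "invertible (cmat A + mat a)"
  shows "w + (adi_gamma a)\<^sup>2 *\<^sub>R v
    = adi_C A a ** w
      - (adi_gamma a)\<^sup>2 *\<^sub>R (matrix_inv (cmat A + mat a) ** (w - (cmat A + mat a) ** v))"
proof -
  let ?P = "cmat A + mat a"
  have residual: "matrix_inv ?P ** (w - ?P ** v) = matrix_inv ?P ** w - v"
    by (simp add: matrix_diff_ldistrib matrix_mul_assoc matrix_inv_left[OF assms(2)])
  show ?thesis
    unfolding adi_C_eq[OF assms] residual
    by (simp add: matrix_add_rdistrib scalar_matrix_assoc algebra_simps)
qed

lemma tolerance_quadratic_bound: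
  fixes a t p c :: real
  assumes "0 \<le> a" "0 \<le> t" "0 \<le> p" "p \<le> 2" "0 \<le> c"
    and t: "t \<le> 1/2 * (sqrt (a\<^sup>2 + 2 * c / p) - a)"
  shows "2 * a * (p * t) + (p * t)\<^sup>2 \<le> c"
proof (cases "p = 0")
  case False
  with assms have "p > 0" by simp
  have "(2 * t + a)\<^sup>2 \<le> (sqrt (a\<^sup>2 + 2 * c / p))\<^sup>2"
    using t assms by (intro power_mono) simp_all
  also have "\<dots> = a\<^sup>2 + 2 * c / p"
    using assms by simp
  finally have "(2 * t + a)\<^sup>2 \<le> a\<^sup>2 + 2 * c / p" .
  then have "p * (2 * t\<^sup>2 + 2 * a * t) \<le> c"
    using \<open>p > 0\<close> by (simp add: power2_eq_square field_simps)
  moreover have "p * (p * t\<^sup>2) \<le> p * (2 * t\<^sup>2)"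
    using assms by (intro mult_left_mono mult_right_mono) simp_all
  ultimately show ?thesis
    by (simp add: power2_eq_square algebra_simps)
qed (use assms in simp)

lemma inexact_adi_step_gram_error:
  fixes A :: "real^'n^'n" and w v x :: "complex^'r^'n"
  assumes shift: "Re a \<le> 0" "invertible (cmat A + mat a)" "spec_norm (adi_C A a) \<le> 1"
    and "0 \<le> c"
    and residual: "spec_norm (w - (cmat A + mat a) ** v)
      \<le> 1/2 * (sqrt ((spec_norm w)\<^sup>2
            + 2 * c / (spec_norm (matrix_inv (cmat A + mat a)) * (adi_gamma a)\<^sup>2))
          - spec_norm w)"
  shows "spec_norm ((w + (adi_gamma a)\<^sup>2 *\<^sub>R v) ** adj (w + (adi_gamma a)\<^sup>2 *\<^sub>R v)
             - (adi_C A a ** x) ** adj (adi_C A a ** x))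
         \<le> spec_norm (w ** adj w - x ** adj x) + c"
proof -
  define P where "P = cmat A + mat a"
  define p where "p = (adi_gamma a)\<^sup>2 * spec_norm (matrix_inv P)"
  define t where "t = spec_norm (w - P ** v)"
  define E where "E = - ((adi_gamma a)\<^sup>2 *\<^sub>R (matrix_inv P ** (w - P ** v)))"
  have update: "w + (adi_gamma a)\<^sup>2 *\<^sub>R v = adi_C A a ** w + E"
    using inexact_adi_update_eq[OF shift(1,2)] by (simp add: E_def P_def)
  have E: "spec_norm E \<le> p * t"
    unfolding E_def p_def t_def spec_norm_uminus spec_norm_scaleR
    using mult_left_mono[OF spec_norm_mult zero_le_power2] by (simp add: mult.assoc)
  have "t \<le> 1/2 * (sqrt ((spec_norm w)\<^sup>2 + 2 * c / p) - spec_norm w)"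
    using residual by (simp add: P_def p_def t_def mult.commute)
  then have tolerance: "2 * spec_norm w * (p * t) + (p * t)\<^sup>2 \<le> c"
    using adi_gamma_sq_spec_norm_inv_le[OF shift] \<open>0 \<le> c\<close>
    by (intro tolerance_quadratic_bound) (simp_all add: P_def p_def t_def spec_norm_nonneg)
  show ?thesis
    unfolding update
    using spec_norm_gram_diff_perturb[OF shift(3) E, of w x] tolerance by linarith
qed

lemma inexact_lr_adi_gram_error:
  fixes A :: "real^'n^'n" and B :: "real^'r^'n" and w v :: "nat \<Rightarrow> complex^'r^'n"
  assumes re: "\<And>j. j \<in> {1..n} \<Longrightarrow> Re (alpha j) \<le> 0"
    and inv: "\<And>j. j \<in> {1..n} \<Longrightarrow> invertible (cmat A + mat (alpha j))"
    and contractive: "\<And>j. j \<in> {1..n} \<Longrightarrow> spec_norm (adi_C A (alpha j)) \<le> 1"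
    and "0 \<le> c"
    and w0: "w 0 = cmat B"
    and update: "\<And>k. k < n \<Longrightarrow> w (Suc k) = w k + (adi_gamma (alpha (Suc k)))\<^sup>2 *\<^sub>R v (Suc k)"
    and residual: "\<And>k. k < n \<Longrightarrow>
       spec_norm (w k - (cmat A + mat (alpha (Suc k))) ** v (Suc k))
         \<le> 1/2 * (sqrt ((spec_norm (w k))\<^sup>2
                + 2 * c / (spec_norm (matrix_inv (cmat A + mat (alpha (Suc k))))
                             * (adi_gamma (alpha (Suc k)))\<^sup>2))
              - spec_norm (w k))"
    and "k \<le> n"
  shows "spec_norm (w k ** adj (w k) - w_exact A B alpha k ** adj (w_exact A B alpha k)) \<le> real k * c"
  using \<open>k \<le> n\<close>
proof (induction k)
  case 0
  then show ?case
    by (simp add: w0 spec_norm_zero)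
next
  case (Suc k)
  then have "k < n" and "Suc k \<in> {1..n}"
    by auto
  have "spec_norm (w (Suc k) ** adj (w (Suc k))
        - w_exact A B alpha (Suc k) ** adj (w_exact A B alpha (Suc k)))
      \<le> spec_norm (w k ** adj (w k) - w_exact A B alpha k ** adj (w_exact A B alpha k)) + c"
    unfolding update[OF \<open>k < n\<close>] w_exact.simps
    using re inv contractive \<open>Suc k \<in> {1..n}\<close>
    by (intro inexact_adi_step_gram_error \<open>0 \<le> c\<close> residual[OF \<open>k < n\<close>]) auto
  also have "\<dots> \<le> real k * c + c"
    using Suc by simp
  finally show ?case
    by (simp add: algebra_simps)
qed

theorem theorem3p7:
  fixes A :: "real^'n^'n" and B :: "real^'r^'n"
    and alpha :: "nat \<Rightarrow> complex" and jmax :: nat and \<epsilon> :: real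
    and v w :: "nat \<Rightarrow> complex^'r^'n"
  assumes jmax: "jmax \<ge> 1"
    and eps: "0 < \<epsilon>" "\<epsilon> < 1"
    and shifts: "\<forall>j\<in>{1..jmax}. Re (alpha j) < 0 \<and> invertible (cmat A + mat (alpha j))
                     \<and> spec_norm (adi_C A (alpha j)) < 1"
    and w0: "w 0 = cmat B"
    and wk: "\<forall>k\<in>{1..jmax}. w k = w (k - 1) + (adi_gamma (alpha k))\<^sup>2 *\<^sub>R v k"
    and sk: "\<forall>k\<in>{1..jmax}.
       spec_norm (w (k - 1) - (cmat A + mat (alpha k)) ** v k)
         \<le> 1/2 * (sqrt ((spec_norm (w (k - 1)))\<^sup>2
                + 2 * \<epsilon> / (spec_norm (matrix_inv (cmat A + mat (alpha k)))
                             * (adi_gamma (alpha k))\<^sup>2 * real jmax))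
              - spec_norm (w (k - 1)))"
  shows "spec_norm (w jmax ** adj (w jmax))
           \<le> spec_norm (w_exact A B alpha jmax ** adj (w_exact A B alpha jmax)) + \<epsilon>"
proof -
  define c where "c = \<epsilon> / real jmax"
  let ?W = "w jmax ** adj (w jmax)"
    and ?X = "w_exact A B alpha jmax ** adj (w_exact A B alpha jmax)"
  have "spec_norm (?W - ?X) \<le> real jmax * c"
  proof (rule inexact_lr_adi_gram_error[where n = jmax])
    fix k assume "k < jmax"
    then have k: "Suc k \<in> {1..jmax}"
      by simp
    show "w (Suc k) = w k + (adi_gamma (alpha (Suc k)))\<^sup>2 *\<^sub>R v (Suc k)"
      using wk k by auto
    show "spec_norm (w k - (cmat A + mat (alpha (Suc k))) ** v (Suc k))
         \<le> 1/2 * (sqrt ((spec_norm (w k))\<^sup>2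
                + 2 * c / (spec_norm (matrix_inv (cmat A + mat (alpha (Suc k))))
                             * (adi_gamma (alpha (Suc k)))\<^sup>2))
              - spec_norm (w k))"
      using bspec[OF sk k] by (simp add: c_def mult_ac)
  qed (use shifts w0 eps in \<open>auto simp: c_def less_imp_le\<close>)
  also have "\<dots> = \<epsilon>"
    using jmax by (simp add: c_def)
  finally show ?thesis
    using spec_norm_add[of ?X "?W - ?X"] by simp
qed

end
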